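(* Fix an integer $n\ge 1$, real numbers $c_1<c_2<\cdots<c_n$ and a real number $\epsilon$. On $\mathbb{R}^3$ with coordinates $(x,y,z)$ put $\rho=\sqrt{x^2+y^2}$, $r_j=\sqrt{x^2+y^2+(z-c_j)^2}$ and $$V_\epsilon=\frac{\epsilon}{2}+\frac12\sum_{j=1}^n\frac{1}{r_j},\qquad \alpha=-\frac12\sum_{j=1}^n\frac{x\,dy-y\,dx}{r_j\,(r_j-z+c_j)},$$ defined on $U=\mathbb{R}^3\setminus\{(0,0,z): z\ge c_1\}$. On $U\times S^1$, with $\varphi$ the angular coordinate on $S^1$, let $$g_\epsilon=\frac{1}{V_\epsilon}(d\varphi+\alpha)^2+V_\epsilon\,(dx^2+dy^2+dz^2),$$ considered on the open subset $W$ of $U\times S^1$ where $V_\epsilon\ne0$ and $\rho>0$. Let $$z_1=\prod_{j=1}^n\bigl(r_j-(z-c_j)\bigr)^{1/2}\,e^{-\frac{\epsilon}{2}z+\sqrt{-1}\,\varphi},\qquad z_2=x+\sqrt{-1}\,y,$$ and define $\beta_1=z_1$, $\alpha_1=z_2/z_1$ (so $z_1=\beta_1$, $z_2=\alpha_1\beta_1$). Set $S=\sum_{j=1}^n\frac{r_j+z-c_j}{r_j}$. Then on $W$, $$\begin{aligned}g_\epsilon=&\Bigl[V_\epsilon\rho^2+\frac{S^2}{4V_\epsilon}\Bigr]\frac{d\alpha_1}{\alpha_1}\frac{d\bar\alpha_1}{\bar\alpha_1}+\Bigl[V_\epsilon\rho^2-\frac{S}{2V_\epsilon}+\frac{S^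2}{4V_\epsilon}\Bigr]\Bigl(\frac{d\alpha_1}{\alpha_1}\frac{d\bar\beta_1}{\bar\beta_1}+\frac{d\beta_1}{\beta_1}\frac{d\bar\alpha_1}{\bar\alpha_1}\Bigr)\\&+\Bigl[\frac{1}{V_\epsilon}+V_\epsilon\rho^2-\frac{S}{V_\epsilon}+\frac{S^2}{4V_\epsilon}\Bigr]\frac{d\beta_1}{\beta_1}\frac{d\bar\beta_1}{\bar\beta_1}.\end{aligned}$$
   Context: For $\epsilon>0$, $g_\epsilon$ is the (toric) multi-Taub-NUT metric; for $\epsilon=0$ it is the Gibbons–Hawking metric. The functions $z_1,z_2$ (hence $\alpha_1,\beta_1$) are holomorphic for the complex structure whose $(1,0)$-forms are spanned by $dx+\sqrt{-1}\,dy$ and $(d\varphi+\alpha)+\sqrt{-1}\,V_\epsilon\,dz$. A product $ab$ of two (complex) $1$-forms denotes the symmetric product $\tfrac12(a\otimes b+b\otimes a)$, so that e.g. $(dx+\sqrt{-1}dy)(dx-\sqrt{-1}dy)=dx^2+dy^2$; $dx^2$ means $dx\,dx$. *)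

theory Defs
  imports "HOL-Analysis.Analysis"
begin

text \<open>Points of U x S^1 in coordinates (x,y,z,phi); phi is a real lift of the
  angle on S^1 (all functions below are 2pi-periodic in phi).  Tangent vectors
  are written in the same coordinates, so dx(v) = px v etc.\<close>
type_synonym pt = "real \<times> real \<times> real \<times> real"

definition px :: "pt \<Rightarrow> real" where "px p = fst p"
definition py :: "pt \<Rightarrow> real" where "py p = fst (snd p)"
definition pz :: "pt \<Rightarrow> real" where "pz p = fst (snd (snd p))"
definition pphi :: "pt \<Rightarrow> real" where "pphi p = snd (snd (snd p))"

definition rho :: "pt \<Rightarrow> real" where "rho p = sqrt ((px p)\<^sup>2 + (py p)\<^sup>2)"

definition rr :: "(nat \<Rightarrow> real) \<Rightarrow> nat \<Rightarrow> pt \<Rightarrow> real" where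
  "rr c j p = sqrt ((px p)\<^sup>2 + (py p)\<^sup>2 + (pz p - c j)\<^sup>2)"

definition Veps :: "real \<Rightarrow> nat \<Rightarrow> (nat \<Rightarrow> real) \<Rightarrow> pt \<Rightarrow> real" where
  "Veps eps n c p = eps / 2 + 1/2 * (\<Sum>j=1..n. 1 / rr c j p)"

definition alphaF :: "nat \<Rightarrow> (nat \<Rightarrow> real) \<Rightarrow> pt \<Rightarrow> pt \<Rightarrow> real" where
  "alphaF n c p v = - 1/2 * (\<Sum>j=1..n.
      (px p * py v - py p * px v) / (rr c j p * (rr c j p - pz p + c j)))"

definition geps :: "real \<Rightarrow> nat \<Rightarrow> (nat \<Rightarrow> real) \<Rightarrow> pt \<Rightarrow> pt \<Rightarrow> pt \<Rightarrow> real" where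
  "geps eps n c p v w =
     1 / Veps eps n c p * ((pphi v + alphaF n c p v) * (pphi w + alphaF n c p w))
     + Veps eps n c p * (px v * px w + py v * py w + pz v * pz w)"

text \<open>The domain W (in coordinates): V_eps \<noteq> 0 and rho > 0 (which implies p \<in> U).\<close>
definition Wdom :: "real \<Rightarrow> nat \<Rightarrow> (nat \<Rightarrow> real) \<Rightarrow> pt set" where
  "Wdom eps n c = {p. rho p > 0 \<and> Veps eps n c p \<noteq> 0}"

definition z1 :: "real \<Rightarrow> nat \<Rightarrow> (nat \<Rightarrow> real) \<Rightarrow> pt \<Rightarrow> complex" where
  "z1 eps n c p = complex_of_real (\<Prod>j=1..n. sqrt (rr c j p - (pz p - c j)))
      * exp (complex_of_real (- eps / 2 * pz p) + \<i> * complex_of_real (pphi p))"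

definition z2 :: "pt \<Rightarrow> complex" where "z2 p = Complex (px p) (py p)"

definition beta1 :: "real \<Rightarrow> nat \<Rightarrow> (nat \<Rightarrow> real) \<Rightarrow> pt \<Rightarrow> complex" where
  "beta1 eps n c p = z1 eps n c p"

definition alpha1 :: "real \<Rightarrow> nat \<Rightarrow> (nat \<Rightarrow> real) \<Rightarrow> pt \<Rightarrow> complex" where
  "alpha1 eps n c p = z2 p / z1 eps n c p"

definition Ssum :: "nat \<Rightarrow> (nat \<Rightarrow> real) \<Rightarrow> pt \<Rightarrow> real" where
  "Ssum n c p = (\<Sum>j=1..n. (rr c j p + pz p - c j) / rr c j p)"

definition dlog :: "(pt \<Rightarrow> complex) \<Rightarrow> pt \<Rightarrow> pt \<Rightarrow> complex" where
  "dlog f p v = frechet_derivative f (at p) v / f p"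

definition dlogbar :: "(pt \<Rightarrow> complex) \<Rightarrow> pt \<Rightarrow> pt \<Rightarrow> complex" where
  "dlogbar f p v = cnj (dlog f p v)"

definition symp :: "(pt \<Rightarrow> complex) \<Rightarrow> (pt \<Rightarrow> complex) \<Rightarrow> pt \<Rightarrow> pt \<Rightarrow> complex" where
  "symp a b v w = (a v * b w + a w * b v) / 2"

end

theory Submission
  imports Defs
begin

text \<open>Write (x, y) = rho (cos theta, sin theta). Then dz2/z2 = d rho/rho + i d theta, and since
  (r_j + z - c_j)(r_j - (z - c_j)) = rho^2, the logarithmic derivative of beta1 = z1 is
  (S/2) d rho/rho - V dz + i d phi, while the connection form is alpha = -(S/2) d theta. Hence
  d alpha1/alpha1 = dz2/z2 - d beta1/beta1, and
  g = (d phi - (S/2) d theta)^2 / V + V (rho^2 (d rho/rho)^2 + rho^2 d theta^2 + dz^2)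
  is a quadratic identity in these two complex 1-forms.\<close>

lemma dlog_eq: "(f has_derivative f') (at p) \<Longrightarrow> dlog f p v = f' v / f p"
  unfolding dlog_def by (metis frechet_derivative_at)

lemma dlog_mult:
  assumes "f differentiable (at p)" "g differentiable (at p)" "f p \<noteq> 0" "g p \<noteq> 0"
  shows "dlog (\<lambda>x. f x * g x) p v = dlog f p v + dlog g p v"
proof -
  obtain f' g' where f': "(f has_derivative f') (at p)" and g': "(g has_derivative g') (at p)"
    using assms(1,2) by (auto simp: differentiable_def)
  have "dlog (\<lambda>x. f x * g x) p v = (f p * g' v + f' v * g p) / (f p * g p)"
    using dlog_eq[OF has_derivative_mult[OF f' g']] .
  also have "\<dots> = dlog f p v + dlog g p v"
    using assms(3,4) by (simp add: dlog_eq[OF f'] dlog_eq[OF g'] field_simps)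
  finally show ?thesis .
qed

lemma dlog_divide:
  assumes "f differentiable (at p)" "g differentiable (at p)" "f p \<noteq> 0" "g p \<noteq> 0"
  shows "dlog (\<lambda>x. f x / g x) p v = dlog f p v - dlog g p v"
proof -
  obtain f' g' where f': "(f has_derivative f') (at p)" and g': "(g has_derivative g') (at p)"
    using assms(1,2) by (auto simp: differentiable_def)
  have "dlog (\<lambda>x. f x / g x) p v
      = (- f p * (inverse (g p) * g' v * inverse (g p)) + f' v / g p) / (f p / g p)"
    using dlog_eq[OF has_derivative_divide[OF f' g' assms(4)]] .
  also have "\<dots> = dlog f p v - dlog g p v"
    using assms(3,4) by (simp add: dlog_eq[OF f'] dlog_eq[OF g'] field_simps)
  finally show ?thesis .
qed

lemma has_derivative_exp_compose:
  fixes g :: "'a::real_normed_vector \<Rightarrow> 'b::{banach,real_normed_field}"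
  assumes "(g has_derivative g') (at p)"
  shows "((\<lambda>x. exp (g x)) has_derivative (\<lambda>v. g' v * exp (g p))) (at p)"
  using has_derivative_compose[OF assms DERIV_exp[unfolded has_field_derivative_def]]
  by (simp add: mult.commute)

lemma dlog_exp: "(g has_derivative g') (at p) \<Longrightarrow> dlog (\<lambda>x. exp (g x)) p v = g' v"
  by (simp add: dlog_eq[OF has_derivative_exp_compose])

lemma differentiable_prod:
  fixes f :: "'i \<Rightarrow> 'a::real_normed_vector \<Rightarrow> 'b::real_normed_field"
  assumes "\<And>i. i \<in> I \<Longrightarrow> f i differentiable (at p)"
  shows "(\<lambda>x. \<Prod>i\<in>I. f i x) differentiable (at p)"
proof -
  have "\<And>i. i \<in> I \<Longrightarrow> (f i has_derivative frechet_derivative (f i) (at p)) (at p)"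
    using assms frechet_derivative_works by blast
  then show ?thesis
    by (rule differentiableI[OF has_derivative_prod])
qed

lemma dlog_prod:
  assumes "finite I" "\<And>i. i \<in> I \<Longrightarrow> f i differentiable (at p) \<and> f i p \<noteq> 0"
  shows "dlog (\<lambda>x. \<Prod>i\<in>I. f i x) p v = (\<Sum>i\<in>I. dlog (f i) p v)"
  using assms
proof (induction I rule: finite_induct)
  case empty
  show ?case by (simp add: dlog_eq[OF has_derivative_const])
next
  case (insert i I)
  have "(\<lambda>x. \<Prod>i\<in>I. f i x) differentiable (at p)"
    using insert.prems by (intro differentiable_prod) simp
  then show ?case
    using insert by (simp add: dlog_mult prod_zero_iff)
qed

lemma dlog_of_real_sqrt:
  assumes "(Q has_derivative Q') (at p)" "0 < Q p"
  shows "dlog (\<lambda>x. complex_of_real (sqrt (Q x))) p v = complex_of_real (Q' v / (2 * Q p))"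
proof -
  have "((\<lambda>x. complex_of_real (sqrt (Q x))) has_derivative
        (\<lambda>v. complex_of_real (Q' v * (inverse (sqrt (Q p)) / 2)))) (at p)"
    using assms by (auto intro!: derivative_eq_intros)
  then show ?thesis
    using assms(2) by (simp add: dlog_eq field_simps flip: of_real_mult)
qed

lemma has_derivative_px [derivative_intros]: "(px has_derivative px) F"
  unfolding px_def[abs_def] by (rule derivative_eq_intros refl)+

lemma has_derivative_py [derivative_intros]: "(py has_derivative py) F"
  unfolding py_def[abs_def] by (rule derivative_eq_intros refl)+

lemma has_derivative_pz [derivative_intros]: "(pz has_derivative pz) F"
  unfolding pz_def[abs_def] by (rule derivative_eq_intros refl)+

lemma has_derivative_pphi [derivative_intros]: "(pphi has_derivative pphi) F"
  unfolding pphi_def[abs_def] by (rule derivative_eq_intros refl)+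

lemma abs_pz_less_rr:
  assumes "0 < rho p"
  shows "\<bar>pz p - c j\<bar> < rr c j p"
proof -
  have "0 < (px p)\<^sup>2 + (py p)\<^sup>2"
    using assms by (simp add: rho_def)
  then have "sqrt ((pz p - c j)\<^sup>2) < rr c j p"
    unfolding rr_def by (intro real_sqrt_less_mono) simp
  then show ?thesis by simp
qed

lemma rr_plus_times_rr_minus: "(rr c j p + (pz p - c j)) * (rr c j p - (pz p - c j)) = (rho p)\<^sup>2"
proof -
  have "(rr c j p + (pz p - c j)) * (rr c j p - (pz p - c j)) = (rr c j p)\<^sup>2 - (pz p - c j)\<^sup>2"
    by (simp add: algebra_simps power2_eq_square)
  then show ?thesis
    by (simp add: rr_def rho_def)
qed

lemma has_derivative_rr_minus:
  assumes "0 < rr c j p"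
  shows "((\<lambda>x. rr c j x - (pz x - c j)) has_derivative
      (\<lambda>v. (px p * px v + py p * py v + (pz p - c j) * pz v) / rr c j p - pz v)) (at p)"
  unfolding rr_def[abs_def] using assms
  by (auto intro!: derivative_eq_intros simp: rr_def field_simps)

lemma dlog_sqrt_rr_minus:
  assumes "0 < rho p"
  shows "dlog (\<lambda>x. complex_of_real (sqrt (rr c j x - (pz x - c j)))) p v
    = complex_of_real ((px p * px v + py p * py v) / 2 * (1 / (rr c j p * (rr c j p - (pz p - c j))))
        - pz v / 2 * (1 / rr c j p))"
proof -
  have r: "0 < rr c j p" and q: "0 < rr c j p - (pz p - c j)"
    using abs_pz_less_rr[OF assms, of c j] by linarith+
  have "((px p * px v + py p * py v + (pz p - c j) * pz v) / rr c j p - pz v) / (2 * (rr c j p - (pz p - c j)))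
    = (px p * px v + py p * py v) / 2 * (1 / (rr c j p * (rr c j p - (pz p - c j))))
      - pz v / 2 * (1 / rr c j p)"
  proof -
    have "\<And>r a N t :: real. 0 < r \<Longrightarrow> 0 < r - a \<Longrightarrow>
        ((N + a * t) / r - t) / (2 * (r - a)) = N / 2 * (1 / (r * (r - a))) - t / 2 * (1 / r)"
      by (simp add: field_simps)
    from this[OF r q] show ?thesis by simp
  qed
  then show ?thesis
    by (simp add: dlog_of_real_sqrt[OF has_derivative_rr_minus[OF r] q])
qed

text \<open>The real 1-forms d rho/rho and d theta at p.\<close>

definition radial_form :: "pt \<Rightarrow> pt \<Rightarrow> real" where
  "radial_form p v = (px p * px v + py p * py v) / (rho p)\<^sup>2"

definition angular_form :: "pt \<Rightarrow> pt \<Rightarrow> real" where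
  "angular_form p v = (px p * py v - py p * px v) / (rho p)\<^sup>2"

lemma rho_squared: "(rho p)\<^sup>2 = (px p)\<^sup>2 + (py p)\<^sup>2"
  by (simp add: rho_def)

lemma has_derivative_z2: "(z2 has_derivative z2) (at p)"
proof -
  have z2_eq: "z2 = (\<lambda>p. complex_of_real (px p) + \<i> * complex_of_real (py p))"
    by (auto simp: z2_def complex_eq_iff)
  show ?thesis
    unfolding z2_eq by (auto intro!: derivative_eq_intros)
qed

lemma dlog_z2:
  assumes "0 < rho p"
  shows "dlog z2 p v = Complex (radial_form p v) (angular_form p v)"
proof -
  have "0 < (px p)\<^sup>2 + (py p)\<^sup>2"
    using assms by (simp add: rho_def)
  then show ?thesis
    unfolding dlog_eq[OF has_derivative_z2] radial_form_def angular_form_def rho_squared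
    by (simp add: z2_def complex_eq_iff Re_divide Im_divide field_simps power2_eq_square)
qed

lemma Ssum_eq:
  assumes "0 < rho p"
  shows "Ssum n c p = (rho p)\<^sup>2 * (\<Sum>j=1..n. 1 / (rr c j p * (rr c j p - (pz p - c j))))"
proof -
  have "(rr c j p + pz p - c j) / rr c j p = (rho p)\<^sup>2 * (1 / (rr c j p * (rr c j p - (pz p - c j))))" for j
  proof -
    have r: "0 < rr c j p" and q: "0 < rr c j p - (pz p - c j)"
      using abs_pz_less_rr[OF assms, of c j] by linarith+
    have "\<And>r a :: real. 0 < r \<Longrightarrow> 0 < r - a \<Longrightarrow>
        (r + a) / r = (r + a) * (r - a) * (1 / (r * (r - a)))"
      by (simp add: field_simps)
    from this[OF r q, unfolded rr_plus_times_rr_minus] show ?thesis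
      by (simp only: add_diff_eq)
  qed
  then show ?thesis
    by (simp add: Ssum_def sum_distrib_left)
qed

lemma alphaF_eq:
  assumes "0 < rho p"
  shows "alphaF n c p v = - Ssum n c p / 2 * angular_form p v"
proof -
  have "alphaF n c p v = - 1/2 * ((px p * py v - py p * px v)
      * (\<Sum>j=1..n. 1 / (rr c j p * (rr c j p - (pz p - c j)))))"
    by (simp add: alphaF_def sum_distrib_left algebra_simps)
  moreover have "px p * py v - py p * px v = (rho p)\<^sup>2 * angular_form p v"
    using assms by (simp add: angular_form_def)
  ultimately show ?thesis
    using assms by (simp add: Ssum_eq)
qed

lemma sqrt_rr_minus_differentiable_nonzero:
  assumes "0 < rho p"
  shows "(\<lambda>x. complex_of_real (sqrt (rr c j x - (pz x - c j)))) differentiable (at p)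
    \<and> complex_of_real (sqrt (rr c j p - (pz p - c j))) \<noteq> 0"
proof -
  have r: "0 < rr c j p" and q: "0 < rr c j p - (pz p - c j)"
    using abs_pz_less_rr[OF assms, of c j] by linarith+
  show ?thesis
    using q differentiableI[OF has_derivative_of_real[OF
        has_derivative_real_sqrt[OF q has_derivative_rr_minus[OF r]]]]
    by simp
qed

lemma beta1_eq:
  "beta1 eps n c = (\<lambda>x. (\<Prod>j\<in>{1..n}. complex_of_real (sqrt (rr c j x - (pz x - c j))))
      * exp (complex_of_real (- eps / 2 * pz x) + \<i> * complex_of_real (pphi x)))"
  by (simp add: fun_eq_iff beta1_def z1_def)

lemma has_derivative_z1_exponent:
  "((\<lambda>x. complex_of_real (- eps / 2 * pz x) + \<i> * complex_of_real (pphi x)) has_derivative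
      (\<lambda>v. complex_of_real (- eps / 2 * pz v) + \<i> * complex_of_real (pphi v))) (at p)"
  by (auto intro!: derivative_eq_intros)

lemma beta1_differentiable_nonzero:
  assumes "0 < rho p"
  shows "beta1 eps n c differentiable (at p) \<and> beta1 eps n c p \<noteq> 0"
proof -
  have "(\<lambda>x. \<Prod>j\<in>{1..n}. complex_of_real (sqrt (rr c j x - (pz x - c j)))) differentiable (at p)"
    using sqrt_rr_minus_differentiable_nonzero[OF assms] by (intro differentiable_prod) simp
  moreover have "(\<lambda>x. exp (complex_of_real (- eps / 2 * pz x) + \<i> * complex_of_real (pphi x)))
      differentiable (at p)"
    by (rule differentiableI[OF has_derivative_exp_compose[OF has_derivative_z1_exponent]])
  ultimately show ?thesis
    using sqrt_rr_minus_differentiable_nonzero[OF assms] by (simp add: beta1_eq prod_zero_iff)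
qed

lemma dlog_beta1:
  assumes "0 < rho p"
  shows "dlog (beta1 eps n c) p v
    = Complex (Ssum n c p / 2 * radial_form p v - Veps eps n c p * pz v) (pphi v)"
proof -
  define F where "F j x = complex_of_real (sqrt (rr c j x - (pz x - c j)))" for j x
  define G where "G x = complex_of_real (- eps / 2 * pz x) + \<i> * complex_of_real (pphi x)" for x
  have F: "F j differentiable (at p) \<and> F j p \<noteq> 0" for j
    unfolding F_def[abs_def] using sqrt_rr_minus_differentiable_nonzero[OF assms] .
  have G: "(G has_derivative (\<lambda>v. complex_of_real (- eps / 2 * pz v) + \<i> * complex_of_real (pphi v))) (at p)"
    unfolding G_def[abs_def] by (rule has_derivative_z1_exponent)
  have "dlog (beta1 eps n c) p v = dlog (\<lambda>x. \<Prod>j\<in>{1..n}. F j x) p v + dlog (\<lambda>x. exp (G x)) p v"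
    unfolding beta1_eq F_def[symmetric] G_def[symmetric]
    using F differentiableI[OF has_derivative_exp_compose[OF G]]
    by (intro dlog_mult differentiable_prod) (auto simp: prod_zero_iff)
  also have "dlog (\<lambda>x. \<Prod>j\<in>{1..n}. F j x) p v = (\<Sum>j=1..n. dlog (F j) p v)"
    using F by (intro dlog_prod) auto
  also have "\<dots> = complex_of_real ((px p * px v + py p * py v) / 2
        * (\<Sum>j=1..n. 1 / (rr c j p * (rr c j p - (pz p - c j)))) - pz v / 2 * (\<Sum>j=1..n. 1 / rr c j p))"
    unfolding F_def by (simp add: dlog_sqrt_rr_minus[OF assms] sum_subtractf sum_distrib_left)
  also have "px p * px v + py p * py v = (rho p)\<^sup>2 * radial_form p v"
    using assms by (simp add: radial_form_def)
  also have "dlog (\<lambda>x. exp (G x)) p v = complex_of_real (- eps / 2 * pz v) + \<i> * complex_of_real (pphi v)"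
    by (rule dlog_exp[OF G])
  finally show ?thesis
    using assms by (simp add: complex_eq_iff Veps_def Ssum_eq algebra_simps)
qed

lemma dlog_alpha1:
  assumes "0 < rho p"
  shows "dlog (alpha1 eps n c) p v = Complex (radial_form p v) (angular_form p v) - dlog (beta1 eps n c) p v"
proof -
  have "z2 p \<noteq> 0"
    using assms by (auto simp: z2_def rho_def complex_eq_iff)
  then have "dlog (\<lambda>x. z2 x / beta1 eps n c x) p v = dlog z2 p v - dlog (beta1 eps n c) p v"
    using beta1_differentiable_nonzero[OF assms] differentiableI[OF has_derivative_z2]
    by (intro dlog_divide) auto
  then show ?thesis
    by (simp add: alpha1_def[abs_def] beta1_def dlog_z2[OF assms])
qed

lemma radial_angular_inner:
  assumes "0 < rho p"
  shows "(rho p)\<^sup>2 * (radial_form p v * radial_form p w + angular_form p v * angular_form p w)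
    = px v * px w + py v * py w"
proof -
  have R: "(rho p)\<^sup>2 \<noteq> 0"
    using assms by simp
  have "(rho p)\<^sup>2 * (radial_form p v * radial_form p w + angular_form p v * angular_form p w)
      = ((px p * px v + py p * py v) * (px p * px w + py p * py w)
        + (px p * py v - py p * px v) * (px p * py w - py p * px w)) / (rho p)\<^sup>2"
    unfolding radial_form_def angular_form_def using R by (simp add: field_simps power2_eq_square)
  also have "\<dots> = (rho p)\<^sup>2 * (px v * px w + py v * py w) / (rho p)\<^sup>2"
    unfolding rho_squared by (simp add: algebra_simps power2_eq_square)
  finally show ?thesis
    using R by simp
qed

lemma geps_eq:
  assumes "0 < rho p"
  shows "geps eps n c p v w
    = 1 / Veps eps n c p
        * ((pphi v - Ssum n c p / 2 * angular_form p v) * (pphi w - Ssum n c p / 2 * angular_form p w))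
      + Veps eps n c p
        * ((rho p)\<^sup>2 * (radial_form p v * radial_form p w + angular_form p v * angular_form p w)
           + pz v * pz w)"
  using assms by (simp add: geps_def alphaF_eq radial_angular_inner)

lemma log_frame_identity:
  fixes V R S :: real and u t ph z :: "pt \<Rightarrow> real" and a b :: "pt \<Rightarrow> complex"
  assumes "V \<noteq> 0"
    and b: "\<And>v. b v = Complex (S / 2 * u v - V * z v) (ph v)"
    and a: "\<And>v. a v = Complex (u v) (t v) - b v"
  shows "complex_of_real (1 / V * ((ph v - S / 2 * t v) * (ph w - S / 2 * t w))
        + V * (R * (u v * u w + t v * t w) + z v * z w))
    = complex_of_real (V * R + S\<^sup>2 / (4 * V)) * symp a (\<lambda>v. cnj (a v)) v w
    + complex_of_real (V * R - S / (2 * V) + S\<^sup>2 / (4 * V))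
        * (symp a (\<lambda>v. cnj (b v)) v w + symp b (\<lambda>v. cnj (a v)) v w)
    + complex_of_real (1 / V + V * R - S / V + S\<^sup>2 / (4 * V)) * symp b (\<lambda>v. cnj (b v)) v w"
  using assms(1)
  unfolding symp_def a b
  by (simp add: complex_eq_iff field_simps) (simp add: algebra_simps power2_eq_square)

theorem mainTheorem2:
  fixes n :: nat and c :: "nat \<Rightarrow> real" and eps :: real and p v w :: pt
  assumes "n \<ge> 1"
    and "\<And>i j. 1 \<le> i \<Longrightarrow> i < j \<Longrightarrow> j \<le> n \<Longrightarrow> c i < c j"
    and "p \<in> Wdom eps n c"
  shows "complex_of_real (geps eps n c p v w) =
      complex_of_real (Veps eps n c p * (rho p)\<^sup>2 + (Ssum n c p)\<^sup>2 / (4 * Veps eps n c p))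
        * symp (dlog (alpha1 eps n c) p) (dlogbar (alpha1 eps n c) p) v w
    + complex_of_real (Veps eps n c p * (rho p)\<^sup>2 - Ssum n c p / (2 * Veps eps n c p)
          + (Ssum n c p)\<^sup>2 / (4 * Veps eps n c p))
        * (symp (dlog (alpha1 eps n c) p) (dlogbar (beta1 eps n c) p) v w
           + symp (dlog (beta1 eps n c) p) (dlogbar (alpha1 eps n c) p) v w)
    + complex_of_real (1 / Veps eps n c p + Veps eps n c p * (rho p)\<^sup>2 - Ssum n c p / Veps eps n c p
          + (Ssum n c p)\<^sup>2 / (4 * Veps eps n c p))
        * symp (dlog (beta1 eps n c) p) (dlogbar (beta1 eps n c) p) v w"
proof -
  have rho: "0 < rho p" and V: "Veps eps n c p \<noteq> 0"
    using assms(3) by (auto simp: Wdom_def)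
  show ?thesis
    unfolding geps_eq[OF rho] dlogbar_def[abs_def]
    by (rule log_frame_identity[OF V dlog_beta1[OF rho] dlog_alpha1[OF rho]])
qed

end
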